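(* For $k,d\in\mathbb{Z}_{\ge0}$ let $L^o_{k,d}$ (resp. $L^e_{k,d}$) be the set of pairs of tuples $(\mathbf{k},\mathbf{l})=((k_1,\dots,k_n),(l_1,\dots,l_n))$, $0\le n\le k$, with $k_u\ge1$, $l_u\ge0$, $k_u-1-l_u\ge0$, $k_1+\dots+k_n=k$, such that $s:=\sum_{u=1}^n(k_u-1-l_u)$ satisfies $s\le d$ and $s$ is odd (resp. even); the empty pair ($n=0$, $s=0$) counts as even. Then $|L^o_{0,d}|=|L^o_{1,d}|=0$, $|L^e_{0,d}|=|L^e_{1,d}|=1$; $|L^o_{2,0}|=0$, $|L^o_{2,d}|=1$ for $d\ge1$, $|L^e_{2,d}|=2$; $|L^o_{k,0}|=0$, $|L^e_{0,0}|=1$, $|L^e_{k,0}|=2^{k-1}$ for $k\ge1$; and for $k\ge3$, $d\ge1$, \[|L^o_{k,d}|=2|L^o_{k-1,d}|+|L^e_{k-1,d-1}|-|L^e_{k-2,d-1}|,\qquad |L^e_{k,d}|=2|L^e_{k-1,d}|+|L^o_{k-1,d-1}|-|L^o_{k-2,d-1}|.\] In particular $|L^o_{0,0}|=0$, $|L^e_{0,0}|=1$, and for $k\ge1$, $|L^o_{k,k}|=(F_{2k}-F_k)/2$ and $|L^e_{k,k}|=(F_{2k}+F_k)/2$.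
   Context: $F_j$ denotes the $j$-th Fibonacci number ($F_1=F_2=1$, $F_{j}=F_{j-1}+F_{j-2}$). In the paper each pair $(\mathbf{k},\mathbf{l})$ represents the iterated log-sine integral $\mathrm{Ls}_{\mathbf{k}}^{\mathbf{l}}(\sigma)=(-1)^n\int_0^{\sigma}\int_0^{\theta_n}\cdots\int_0^{\theta_2}\prod_{u}\theta_u^{l_u}(\log|2\sin(\theta_u/2)|)^{k_u-1-l_u}\,d\theta_1\cdots d\theta_n$ at a fixed real $\sigma$. *)

theory Defs
  imports Complex_Main "HOL-Number_Theory.Fib"
begin

definition admissible :: "nat \<Rightarrow> nat list \<Rightarrow> nat list \<Rightarrow> bool" where
  "admissible k ks ls \<longleftrightarrow> length ks = length ls \<and> length ks \<le> k \<and>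
     (\<forall>u < length ks. 1 \<le> ks ! u \<and> ls ! u + 1 \<le> ks ! u) \<and> sum_list ks = k"

text \<open>s = sum of (k_u - 1 - l_u) (all summands are nonnegative for admissible pairs).\<close>
definition sdeg :: "nat list \<Rightarrow> nat list \<Rightarrow> nat" where
  "sdeg ks ls = (\<Sum>u < length ks. ks ! u - 1 - ls ! u)"

definition Lodd :: "nat \<Rightarrow> nat \<Rightarrow> (nat list \<times> nat list) set" where
  "Lodd k d = {(ks, ls). admissible k ks ls \<and> sdeg ks ls \<le> d \<and> odd (sdeg ks ls)}"

definition Leven :: "nat \<Rightarrow> nat \<Rightarrow> (nat list \<times> nat list) set" where
  "Leven k d = {(ks, ls). admissible k ks ls \<and> sdeg ks ls \<le> d \<and> even (sdeg ks ls)}"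

end

theory Submission
  imports Defs
begin

text \<open>Count the admissible pairs of weight \<open>k\<close> whose \<open>s\<close> satisfies an arbitrary condition
  \<open>P\<close>. A nonempty pair either starts with \<open>(k\<^sub>1, l\<^sub>1) = (1, 0)\<close>, or arises from a pair
  of weight \<open>k - 1\<close> by raising \<open>k\<^sub>1\<close> and \<open>l\<^sub>1\<close> together (which keeps \<open>s\<close>), or, when
  \<open>l\<^sub>1 = 0\<close> and \<open>k\<^sub>1 \<ge> 2\<close>, by raising \<open>k\<^sub>1\<close> alone (which raises \<open>s\<close> by one, so the
  condition becomes \<open>P \<circ> Suc\<close>, turning odd into even). As the pairs with \<open>l\<^sub>1 \<ge> 1\<close>
  correspond to the nonempty pairs of weight \<open>k - 1\<close>, the number of pairs with \<open>l\<^sub>1 = 0\<close> is a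
  difference of two totals, and the recurrences follow. For \<open>d = k\<close> the bound on \<open>s\<close> is void; then the
  sum of the odd and even counts satisfies \<open>a\<^sub>k = 3 a\<^sub>k\<^sub>-\<^sub>1 - a\<^sub>k\<^sub>-\<^sub>2\<close>, like \<open>F\<^sub>2\<^sub>k\<close>,
  and their difference satisfies the Fibonacci recurrence.\<close>

lemma admissible_iff_list_all2:
  "admissible k ks ls \<longleftrightarrow> list_all2 (\<lambda>m l. l < m) ks ls \<and> sum_list ks = k"
proof -
  have "length ks \<le> sum_list ks" if "list_all2 (\<lambda>m l. l < m) ks ls"
    using that by (induction ks ls rule: list_all2_induct) auto
  then show ?thesis
    unfolding admissible_def list_all2_conv_all_nth by auto
qed

lemma admissible_Nil [simp]: "admissible k [] ls \<longleftrightarrow> k = 0 \<and> ls = []"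
  and admissible_Nil2 [simp]: "admissible k ks [] \<longleftrightarrow> k = 0 \<and> ks = []"
  and admissible_Cons [simp]:
    "admissible k (m # ks) (l # ls) \<longleftrightarrow> l < m \<and> m \<le> k \<and> admissible (k - m) ks ls"
  by (auto simp: admissible_iff_list_all2)

lemma sdeg_Nil [simp]: "sdeg [] ls = 0"
  by (simp add: sdeg_def)

lemma sdeg_Cons [simp]: "sdeg (m # ks) (l # ls) = m - 1 - l + sdeg ks ls"
  unfolding sdeg_def by (simp only: length_Cons sum.lessThan_Suc_shift) simp

lemma sdeg_le_weight: "admissible k ks ls \<Longrightarrow> sdeg ks ls \<le> k"
  by (induction ks ls arbitrary: k rule: list_induct2') fastforce+

definition admissible_pairs :: "(nat \<Rightarrow> bool) \<Rightarrow> nat \<Rightarrow> (nat list \<times> nat list) set" where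
  "admissible_pairs P k = {(ks, ls). admissible k ks ls \<and> P (sdeg ks ls)}"

definition head_zero_pairs :: "(nat \<Rightarrow> bool) \<Rightarrow> nat \<Rightarrow> (nat list \<times> nat list) set" where
  "head_zero_pairs P k = {(ks, ls). (ks, ls) \<in> admissible_pairs P k \<and> ls \<noteq> [] \<and> hd ls = 0}"

lemma finite_admissible_pairs: "finite (admissible_pairs P k)"
proof (rule finite_subset)
  let ?lists = "{xs. set xs \<subseteq> {..k} \<and> length xs \<le> k}"
  show "admissible_pairs P k \<subseteq> ?lists \<times> ?lists"
  proof
    fix x assume "x \<in> admissible_pairs P k"
    then obtain ks ls where x: "x = (ks, ls)" and adm: "admissible k ks ls"
      by (auto simp: admissible_pairs_def)
    then have "set ks \<subseteq> {..k}"
      using member_le_sum_list by (fastforce simp: admissible_def)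
    moreover have "set ls \<subseteq> {..k}"
    proof
      fix l assume "l \<in> set ls"
      then obtain u where "u < length ls" "l = ls ! u" by (auto simp: in_set_conv_nth)
      with adm have "l < ks ! u" "ks ! u \<in> set ks" by (auto simp: admissible_def)
      with \<open>set ks \<subseteq> {..k}\<close> show "l \<in> {..k}" by auto
    qed
    ultimately show "x \<in> ?lists \<times> ?lists"
      using adm x by (simp add: admissible_def)
  qed
  show "finite (?lists \<times> ?lists)"
    by (intro finite_cartesian_product finite_lists_length_le) auto
qed

lemma admissible_pairs_0: "admissible_pairs P 0 = (if P 0 then {([], [])} else {})"
  by (auto simp: admissible_pairs_def admissible_def)

lemma head_zero_pairs_0: "head_zero_pairs P 0 = {}"
  by (auto simp: head_zero_pairs_def admissible_pairs_0 split: if_splits)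

lemma Nil_notin_admissible_pairs_Suc: "([], []) \<notin> admissible_pairs P (Suc n)"
  by (simp add: admissible_pairs_def)

lemma admissible_pairs_ConsE:
  assumes "x \<in> admissible_pairs P n" and "x \<noteq> ([], [])"
  obtains m ks l ls where "x = (m # ks, l # ls)"
proof -
  from assms obtain ks ls where "x = (ks, ls)" "admissible n ks ls"
    by (auto simp: admissible_pairs_def)
  then show ?thesis using that assms(2) by (cases ks; cases ls) auto
qed

lemma head_zero_pairs_ConsE:
  assumes "x \<in> head_zero_pairs P n"
  obtains m ks ls where "x = (m # ks, 0 # ls)" and "0 < m"
proof -
  from assms obtain ks ls where "x = (ks, 0 # ls)" "admissible n ks (0 # ls)"
    by (auto simp: head_zero_pairs_def admissible_pairs_def neq_Nil_conv)
  then show ?thesis using that by (cases ks) auto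
qed

fun inc_head :: "nat list \<Rightarrow> nat list" where
  "inc_head [] = []"
| "inc_head (m # ms) = Suc m # ms"

lemma inj_inc_head: "inj inc_head"
proof (rule injI)
  fix xs ys :: "nat list" assume "inc_head xs = inc_head ys"
  then show "xs = ys" by (cases xs; cases ys) auto
qed

lemma admissible_pairs_Suc_split:
  "admissible_pairs P (Suc n) =
     head_zero_pairs P (Suc n) \<union> map_prod inc_head inc_head ` (admissible_pairs P n - {([], [])})"
  (is "_ = ?head_zero \<union> ?positive")
proof (intro equalityI subsetI)
  fix x assume x: "x \<in> admissible_pairs P (Suc n)"
  then obtain m ks l ls where x_eq: "x = (m # ks, l # ls)"
    using Nil_notin_admissible_pairs_Suc by (blast elim: admissible_pairs_ConsE)
  show "x \<in> ?head_zero \<union> ?positive"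
  proof (cases l)
    case 0
    then show ?thesis using x by (simp add: head_zero_pairs_def x_eq)
  next
    case (Suc l')
    then obtain m' where "m = Suc m'" using x x_eq by (cases m) (auto simp: admissible_pairs_def)
    then have "x = map_prod inc_head inc_head (m' # ks, l' # ls)"
      and "(m' # ks, l' # ls) \<in> admissible_pairs P n - {([], [])}"
      using x x_eq Suc by (auto simp: admissible_pairs_def)
    then show ?thesis by blast
  qed
next
  fix x assume "x \<in> ?head_zero \<union> ?positive"
  then show "x \<in> admissible_pairs P (Suc n)"
  proof
    assume "x \<in> ?head_zero"
    then show ?thesis by (auto simp: head_zero_pairs_def)
  next
    assume "x \<in> ?positive"
    then obtain y where x: "x = map_prod inc_head inc_head y"
      and y: "y \<in> admissible_pairs P n - {([], [])}"
      by (rule imageE)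
    then obtain m ks l ls where "y = (m # ks, l # ls)"
      by (blast elim: admissible_pairs_ConsE)
    with y show ?thesis by (auto simp: x admissible_pairs_def)
  qed
qed

lemma head_zero_pairs_Suc_split:
  "head_zero_pairs P (Suc n) =
     map_prod (Cons 1) (Cons 0) ` admissible_pairs P n \<union>
     map_prod inc_head id ` head_zero_pairs (P \<circ> Suc) n"
  (is "_ = ?units \<union> ?longer")
proof (intro equalityI subsetI)
  fix x assume x: "x \<in> head_zero_pairs P (Suc n)"
  then obtain m ks ls where x_eq: "x = (m # ks, 0 # ls)" and "0 < m"
    by (rule head_zero_pairs_ConsE)
  show "x \<in> ?units \<union> ?longer"
  proof (cases "m = 1")
    case True
    then have "x = map_prod (Cons 1) (Cons 0) (ks, ls)" "(ks, ls) \<in> admissible_pairs P n"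
      using x by (auto simp: x_eq head_zero_pairs_def admissible_pairs_def)
    then show ?thesis by blast
  next
    case False
    with \<open>0 < m\<close> obtain m' where "m = Suc m'" "1 \<le> m'" by (cases m) auto
    then have "x = map_prod inc_head id (m' # ks, 0 # ls)"
      and "(m' # ks, 0 # ls) \<in> head_zero_pairs (P \<circ> Suc) n"
      using x by (auto simp: x_eq head_zero_pairs_def admissible_pairs_def)
    then show ?thesis by blast
  qed
next
  fix x assume "x \<in> ?units \<union> ?longer"
  then show "x \<in> head_zero_pairs P (Suc n)"
  proof
    assume "x \<in> ?units"
    then show ?thesis by (auto simp: head_zero_pairs_def admissible_pairs_def)
  next
    assume "x \<in> ?longer"
    then obtain y where x: "x = map_prod inc_head id y" and y: "y \<in> head_zero_pairs (P \<circ> Suc) n"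
      by (rule imageE)
    from y obtain m ks ls where "y = (m # ks, 0 # ls)" by (rule head_zero_pairs_ConsE)
    with y show ?thesis by (auto simp: x head_zero_pairs_def admissible_pairs_def)
  qed
qed

lemma finite_head_zero_pairs: "finite (head_zero_pairs P k)"
  by (rule finite_subset[OF _ finite_admissible_pairs]) (auto simp: head_zero_pairs_def)

lemma card_admissible_pairs_Suc:
  "card (admissible_pairs P (Suc n)) =
     card (head_zero_pairs P (Suc n)) + card (admissible_pairs P n - {([], [])})"
proof -
  let ?f = "map_prod inc_head inc_head"
  have "inj ?f" by (intro prod.inj_map inj_inc_head)
  moreover have "head_zero_pairs P (Suc n) \<inter> ?f ` (admissible_pairs P n - {([], [])}) = {}"
    by (auto simp: head_zero_pairs_def elim!: admissible_pairs_ConsE)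
  ultimately show ?thesis
    by (simp add: admissible_pairs_Suc_split card_Un_disjoint finite_head_zero_pairs
        finite_admissible_pairs card_image inj_on_subset)
qed

lemma card_head_zero_pairs_Suc:
  "card (head_zero_pairs P (Suc n)) =
     card (admissible_pairs P n) + card (head_zero_pairs (P \<circ> Suc) n)"
proof -
  have "inj (map_prod (Cons (1::nat)) (Cons (0::nat)))"
    by (rule prod.inj_map) (simp_all add: inj_def)
  moreover have "inj (map_prod inc_head (id :: nat list \<Rightarrow> _))"
    by (rule prod.inj_map) (simp_all add: inj_inc_head)
  moreover have "map_prod (Cons 1) (Cons 0) ` admissible_pairs P n \<inter>
      map_prod inc_head id ` head_zero_pairs (P \<circ> Suc) n = {}"
    by (auto elim!: head_zero_pairs_ConsE)
  ultimately show ?thesis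
    by (simp add: head_zero_pairs_Suc_split card_Un_disjoint finite_head_zero_pairs
        finite_admissible_pairs card_image inj_on_subset)
qed

lemma card_admissible_pairs_recurrence:
  "card (admissible_pairs P (Suc (Suc (Suc n)))) + card (admissible_pairs (P \<circ> Suc) (Suc n)) =
     2 * card (admissible_pairs P (Suc (Suc n)))
       + card (admissible_pairs (P \<circ> Suc) (Suc (Suc n)))"
proof -
  let ?n = "Suc (Suc n)"
  have "card (admissible_pairs P (Suc ?n)) =
      card (head_zero_pairs P (Suc ?n)) + card (admissible_pairs P ?n)"
    and "card (admissible_pairs (P \<circ> Suc) ?n) =
      card (head_zero_pairs (P \<circ> Suc) ?n) + card (admissible_pairs (P \<circ> Suc) (Suc n))"
    using card_admissible_pairs_Suc[of P ?n] card_admissible_pairs_Suc[of "P \<circ> Suc" "Suc n"]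
    by (simp_all add: Nil_notin_admissible_pairs_Suc)
  then show ?thesis
    using card_head_zero_pairs_Suc[of P ?n] by linarith
qed

lemma card_admissible_pairs_1: "card (admissible_pairs P (Suc 0)) = (if P 0 then 1 else 0)"
  using card_admissible_pairs_Suc[of P 0] card_head_zero_pairs_Suc[of P 0]
  by (simp add: admissible_pairs_0 head_zero_pairs_0)

lemma card_admissible_pairs_2:
  "card (admissible_pairs P 2) = (if P 0 then 2 else 0) + (if P 1 then 1 else 0)"
  using card_admissible_pairs_Suc[of P 1] card_head_zero_pairs_Suc[of P 1]
    card_head_zero_pairs_Suc[of "P \<circ> Suc" 0] card_admissible_pairs_1[of P]
  by (simp add: Nil_notin_admissible_pairs_Suc admissible_pairs_0 head_zero_pairs_0
      numeral_2_eq_2 One_nat_def)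

lemma card_admissible_pairs_sdeg_zero: "card (admissible_pairs (\<lambda>s. s = 0) (Suc n)) = 2 ^ n"
proof (induction n)
  case 0
  show ?case by (simp add: card_admissible_pairs_1)
next
  case (Suc n)
  have "head_zero_pairs ((\<lambda>s. s = 0) \<circ> Suc) m = {}" for m
    by (simp add: head_zero_pairs_def admissible_pairs_def)
  then show ?case
    using Suc.IH card_admissible_pairs_Suc[of _ "Suc n"] card_head_zero_pairs_Suc[of _ "Suc n"]
    by (simp add: Nil_notin_admissible_pairs_Suc)
qed

lemma fib_even_index_recurrence: "fib (2 * Suc (Suc n)) + fib (2 * n) = 3 * fib (2 * Suc n)"
  by simp

lemma odd_comp_Suc: "odd \<circ> Suc = even" and even_comp_Suc: "even \<circ> Suc = odd"
  by (simp_all add: fun_eq_iff)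

lemma card_admissible_pairs_parity_recurrence:
  "card (admissible_pairs odd (Suc (Suc (Suc n)))) + card (admissible_pairs even (Suc n)) =
     2 * card (admissible_pairs odd (Suc (Suc n))) + card (admissible_pairs even (Suc (Suc n)))"
  "card (admissible_pairs even (Suc (Suc (Suc n)))) + card (admissible_pairs odd (Suc n)) =
     2 * card (admissible_pairs even (Suc (Suc n))) + card (admissible_pairs odd (Suc (Suc n)))"
  using card_admissible_pairs_recurrence[of odd n] card_admissible_pairs_recurrence[of even n]
  by (simp_all only: odd_comp_Suc even_comp_Suc)

lemma card_admissible_pairs_odd_plus_even:
  "card (admissible_pairs odd (Suc k)) + card (admissible_pairs even (Suc k)) = fib (2 * Suc k)"
proof (induction k rule: fib.induct)
  case 1
  show ?case by (simp add: card_admissible_pairs_1)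
next
  case 2
  have "card (admissible_pairs odd 2) = 1" and "card (admissible_pairs even 2) = 2"
    by (simp_all add: card_admissible_pairs_2)
  then show ?case by (simp add: numeral_2_eq_2)
next
  case (3 n)
  then show ?case
    using card_admissible_pairs_parity_recurrence[of n] fib_even_index_recurrence[of "Suc n"] by linarith
qed

lemma card_admissible_pairs_even_eq_odd_plus_fib:
  "card (admissible_pairs even (Suc k)) = card (admissible_pairs odd (Suc k)) + fib (Suc k)"
proof (induction k rule: fib.induct)
  case 1
  show ?case by (simp add: card_admissible_pairs_1)
next
  case 2
  have "card (admissible_pairs odd 2) = 1" and "card (admissible_pairs even 2) = 2"
    by (simp_all add: card_admissible_pairs_2)
  then show ?case by (simp add: numeral_2_eq_2)
next
  case (3 n)
  then show ?case
    using card_admissible_pairs_parity_recurrence[of n] fib.simps(3)[of "Suc n"] by linarith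
qed

lemma Lodd_eq_admissible_pairs: "Lodd k d = admissible_pairs (\<lambda>s. s \<le> d \<and> odd s) k"
  and Leven_eq_admissible_pairs: "Leven k d = admissible_pairs (\<lambda>s. s \<le> d \<and> even s) k"
  by (simp_all add: Lodd_def Leven_def admissible_pairs_def)

lemma Lodd_diagonal: "Lodd k k = admissible_pairs odd k"
  and Leven_diagonal: "Leven k k = admissible_pairs even k"
  using sdeg_le_weight by (auto simp: Lodd_def Leven_def admissible_pairs_def)

lemma bounded_parity_comp_Suc:
  assumes "1 \<le> d"
  shows "(\<lambda>s. s \<le> d \<and> odd s) \<circ> Suc = (\<lambda>s. s \<le> d - 1 \<and> even s)"
    and "(\<lambda>s. s \<le> d \<and> even s) \<circ> Suc = (\<lambda>s. s \<le> d - 1 \<and> odd s)"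
  using assms by (auto simp: fun_eq_iff)

lemma card_Lodd_Leven_small_weights:
  "card (Lodd 0 d) = 0" "card (Leven 0 d) = 1" "card (Lodd 1 d) = 0" "card (Leven 1 d) = 1"
  "card (Lodd 2 d) = (if d = 0 then 0 else 1)" "card (Leven 2 d) = 2"
  by (simp_all add: Lodd_eq_admissible_pairs Leven_eq_admissible_pairs admissible_pairs_0
      card_admissible_pairs_1 card_admissible_pairs_2 One_nat_def)

lemma Lodd_0: "Lodd k 0 = {}"
  by (auto simp: Lodd_def elim: oddE)

lemma card_Leven_0:
  assumes "1 \<le> k"
  shows "card (Leven k 0) = 2 ^ (k - 1)"
proof -
  have "Leven k 0 = admissible_pairs (\<lambda>s. s = 0) (Suc (k - 1))"
    using assms by (auto simp: Leven_def admissible_pairs_def)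
  then show ?thesis by (simp add: card_admissible_pairs_sdeg_zero)
qed

lemma card_Lodd_Leven_recurrence:
  assumes "3 \<le> k" and "1 \<le> d"
  shows "int (card (Lodd k d)) = 2 * int (card (Lodd (k - 1) d))
           + int (card (Leven (k - 1) (d - 1))) - int (card (Leven (k - 2) (d - 1)))"
    and "int (card (Leven k d)) = 2 * int (card (Leven (k - 1) d))
           + int (card (Lodd (k - 1) (d - 1))) - int (card (Lodd (k - 2) (d - 1)))"
proof -
  define n where "n = k - 3"
  with \<open>3 \<le> k\<close> have k: "k = Suc (Suc (Suc n))" by simp
  have "card (Lodd k d) + card (Leven (k - 2) (d - 1)) =
      2 * card (Lodd (k - 1) d) + card (Leven (k - 1) (d - 1))"
    and "card (Leven k d) + card (Lodd (k - 2) (d - 1)) =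
      2 * card (Leven (k - 1) d) + card (Lodd (k - 1) (d - 1))"
    using card_admissible_pairs_recurrence[of "\<lambda>s. s \<le> d \<and> odd s" n]
      card_admissible_pairs_recurrence[of "\<lambda>s. s \<le> d \<and> even s" n]
    unfolding k bounded_parity_comp_Suc[OF \<open>1 \<le> d\<close>]
    by (simp_all add: Lodd_eq_admissible_pairs Leven_eq_admissible_pairs)
  then show "int (card (Lodd k d)) = 2 * int (card (Lodd (k - 1) d))
           + int (card (Leven (k - 1) (d - 1))) - int (card (Leven (k - 2) (d - 1)))"
    and "int (card (Leven k d)) = 2 * int (card (Leven (k - 1) d))
           + int (card (Lodd (k - 1) (d - 1))) - int (card (Lodd (k - 2) (d - 1)))"
    by linarith+
qed

lemma card_Lodd_Leven_diagonal:
  assumes "1 \<le> k"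
  shows "real (card (Lodd k k)) = (real (fib (2 * k)) - real (fib k)) / 2"
    and "real (card (Leven k k)) = (real (fib (2 * k)) + real (fib k)) / 2"
proof -
  from assms have "card (Lodd k k) + card (Leven k k) = fib (2 * k)"
    and "card (Leven k k) = card (Lodd k k) + fib k"
    using card_admissible_pairs_odd_plus_even[of "k - 1"]
      card_admissible_pairs_even_eq_odd_plus_fib[of "k - 1"]
    by (simp_all add: Lodd_diagonal Leven_diagonal)
  then have "real (card (Lodd k k)) + real (card (Leven k k)) = real (fib (2 * k))"
    and "real (card (Leven k k)) = real (card (Lodd k k)) + real (fib k)"
    by (simp_all flip: of_nat_add)
  then show "real (card (Lodd k k)) = (real (fib (2 * k)) - real (fib k)) / 2"
    and "real (card (Leven k k)) = (real (fib (2 * k)) + real (fib k)) / 2"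
    by (simp_all add: field_simps)
qed

theorem theorem7:
  shows "(\<forall>d. card (Lodd 0 d) = 0 \<and> card (Lodd 1 d) = 0 \<and>
              card (Leven 0 d) = 1 \<and> card (Leven 1 d) = 1)
    \<and> card (Lodd 2 0) = 0
    \<and> (\<forall>d\<ge>1. card (Lodd 2 d) = 1)
    \<and> (\<forall>d. card (Leven 2 d) = 2)
    \<and> (\<forall>k. card (Lodd k 0) = 0)
    \<and> card (Leven 0 0) = 1
    \<and> (\<forall>k\<ge>1. card (Leven k 0) = 2 ^ (k - 1))
    \<and> (\<forall>k\<ge>3. \<forall>d\<ge>1.
          int (card (Lodd k d)) = 2 * int (card (Lodd (k - 1) d))
             + int (card (Leven (k - 1) (d - 1))) - int (card (Leven (k - 2) (d - 1)))
        \<and> int (card (Leven k d)) = 2 * int (card (Leven (k - 1) d))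
             + int (card (Lodd (k - 1) (d - 1))) - int (card (Lodd (k - 2) (d - 1))))
    \<and> card (Lodd 0 0) = 0 \<and> card (Leven 0 0) = 1
    \<and> (\<forall>k\<ge>1. real (card (Lodd k k)) = (real (fib (2 * k)) - real (fib k)) / 2
             \<and> real (card (Leven k k)) = (real (fib (2 * k)) + real (fib k)) / 2)"
  using card_Lodd_Leven_small_weights Lodd_0 card_Leven_0 card_Lodd_Leven_recurrence
    card_Lodd_Leven_diagonal
  by simp

end
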